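(* Let $p\ge1$ and $N\ge1$, and assume $(p-1)\beta_1^2<2(\lambda_1-\beta_0)$. Set $\mu_p:=p(\lambda_1-\beta_0)-\frac{p(p-1)}{2}\beta_1^2$. Then there exists $\tau_0>0$ such that, for every fixed $\tau\in(0,\tau_0)$, the following holds. There is a constant $C>0$, depending only on $N$ and $p$ and independent of $n$, such that the scheme below satisfies \[ \mathbb E\|Y_n\|^p\le Ce^{-\frac{\mu_p}{2}t_n}\,\mathbb E\|Y_0\|^p\qquad\text{for all }n\in\mathbb N. \] Here the scheme is: $t_n=n\tau$, $\Delta W_n=W(t_{n+1})-W(t_n)$, $Y_n=(Y_n^1,\dots,Y_n^N)^\top\in\mathbb R^N$ is defined by \[ Y_{n+1}=M^{-1}\big(Y_n+\beta_1Y_n\Delta W_n\big),\qquad M=I_N+\tau(\Lambda_N-\beta_0I_N), \] with $\Lambda_N=\operatorname{diag}(\lambda_1,\dots,\lambda_N)$ and $Y_0=(y_0^1,\dots,y_0^N)^\top$. Equivalently, for $k=1,\dots,N$, \[ Y_{n+1}^k=\frac{Y_n^k(1+\beta_1\Delta W_n)}{1+\tau(\lambda_k-\beta_0)},\qquad Y_0^k=y_0^k, \] and $\|Y_n\|^p=\big(\sum_{k=1}^N|Y_n^k|^2\big)^{p/2}$.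
   Context: $W$ is a one-dimensional standard Brownian motion on a complete filtered probability space $(\Omega,\mathcal F,\{\mathcal F_t\},\mathbb P)$, with the natural augmented filtration. $H$ is a Hilbert space. $A$ is a linear, self-adjoint, positive-definite operator on $H$ with compact resolvent. Its eigenpairs $(\lambda_k,\phi_k)$ satisfy $0<\lambda_1\le\lambda_2\le\cdots\to\infty$, and $\{\phi_k\}$ is an orthonormal basis. $\beta_0,\beta_1\in\mathbb R$. The initial datum $y_0\in L^p_{\mathcal F_0}(\Omega;H)$ is an $\mathcal F_0$-measurable $H$-valued random variable with finite $p$-th moment, and $y_0^k=\langle y_0,\phi_k\rangle_H$. The scheme is the implicit Euler–Maruyama discretization of the $N$-mode spectral Galerkin truncation $dY_N=-(\Lambda_N-\beta_0I_N)Y_N\,dt+\beta_1Y_N\,dW$ of $dy+Ay\,dt=\beta_0y\,dt+\beta_1y\,dW$. *)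

theory Defs
  imports "HOL-Probability.Probability"
begin

definition std_brownian_motion ::
  "'a measure \<Rightarrow> (real \<Rightarrow> 'a measure) \<Rightarrow> (real \<Rightarrow> 'a \<Rightarrow> real) \<Rightarrow> bool" where
  "std_brownian_motion M F W \<longleftrightarrow>
     prob_space M \<and>
     filtration (space M) F \<and>
     (\<forall>t. sets (F t) \<subseteq> sets M) \<and>
     (\<forall>t\<ge>0. W t \<in> borel_measurable (F t)) \<and>
     (AE \<omega> in M. W 0 \<omega> = 0) \<and>
     (AE \<omega> in M. continuous_on {0..} (\<lambda>t. W t \<omega>)) \<and>
     (\<forall>s t. 0 \<le> s \<and> s < t \<longrightarrow>
        distributed M lborel (\<lambda>\<omega>. W t \<omega> - W s \<omega>)
          (\<lambda>x. ennreal (normal_density 0 (sqrt (t - s)) x))) \<and>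
     (\<forall>s t. 0 \<le> s \<and> s < t \<longrightarrow>
        (\<forall>A\<in>sets (F s). \<forall>B\<in>sets borel.
           measure M (A \<inter> ((\<lambda>\<omega>. W t \<omega> - W s \<omega>) -` B \<inter> space M)) =
           measure M A * measure M ((\<lambda>\<omega>. W t \<omega> - W s \<omega>) -` B \<inter> space M)))"

fun iem_scheme ::
  "real \<Rightarrow> real \<Rightarrow> (nat \<Rightarrow> real) \<Rightarrow> real \<Rightarrow> (real \<Rightarrow> 'a \<Rightarrow> real) \<Rightarrow>
   (nat \<Rightarrow> 'a \<Rightarrow> real) \<Rightarrow> nat \<Rightarrow> nat \<Rightarrow> 'a \<Rightarrow> real" where
  "iem_scheme b0 b1 lam tau W Y0 0 k \<omega> = Y0 k \<omega>"
| "iem_scheme b0 b1 lam tau W Y0 (Suc n) k \<omega> =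
     iem_scheme b0 b1 lam tau W Y0 n k \<omega> *
       (1 + b1 * (W (real (Suc n) * tau) \<omega> - W (real n * tau) \<omega>)) /
       (1 + tau * (lam k - b0))"

definition normp :: "real \<Rightarrow> nat \<Rightarrow> (nat \<Rightarrow> real) \<Rightarrow> real" where
  "normp p N y = (\<Sum>k=1..N. \<bar>y k\<bar>\<^sup>2) powr (p / 2)"

end

theory Submission
  imports Defs "HOL-Real_Asymp.Real_Asymp"
begin

(* Put c = lam 1 - beta0 and DW = W (t_(n+1)) - W t_n.  Every mode is multiplied by the common
   factor 1 + beta1 DW and divided by 1 + tau (lam k - beta0) >= 1 + tau c, so pathwise
   normp (Y (n+1)) <= (|1 + beta1 DW| / (1 + tau c)) powr p * normp (Y n).  As DW ~ N(0, tau) is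
   independent of F t_n, the expectation contracts by E |1 + beta1 DW| powr p / (1 + tau c) powr p
   per step.  Expanding |1 + y| powr p to second order against the Gaussian moments, this factor is
   1 - mu_p tau + O(tau powr (3/2)), hence at most exp (- mu_p tau / 2) for small tau; so C = 1. *)

lemma one_plus_powr_le_two_powr_abs:
  fixes t e :: real
  assumes "\<bar>t\<bar> \<le> 1/2"
  shows "(1 + t) powr e \<le> 2 powr \<bar>e\<bar>"
proof (cases "0 \<le> e")
  case True
  then show ?thesis using assms by (simp add: powr_mono2)
next
  case False
  have "(1/2) powr (-e) \<le> (1 + t) powr (-e)"
    using assms False by (intro powr_mono2) auto
  then have "inverse ((1 + t) powr (-e)) \<le> inverse ((1/2) powr (-e))"
    by (intro le_imp_inverse_le) auto
  then show ?thesis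
    using assms False by (simp add: powr_minus powr_divide)
qed

lemma one_plus_powr_taylor2_remainder:
  fixes p :: real
  obtains K where "0 \<le> K"
    and "\<And>y. \<bar>y\<bar> \<le> 1/2 \<Longrightarrow> \<bar>(1 + y) powr p - (1 + p * y + p * (p - 1) / 2 * y\<^sup>2)\<bar> \<le> K * \<bar>y\<bar> ^ 3"
proof
  define d where "d m t = (\<Prod>i<m. p - real i) * (1 + t) powr (p - real m)" for m t
  define K where "K = \<bar>p * (p - 1) * (p - 2)\<bar> * 2 powr \<bar>p - 3\<bar> / 6"
  show "0 \<le> K" by (simp add: K_def)
  fix y :: real
  assume y: "\<bar>y\<bar> \<le> 1/2"
  have deriv: "(d m has_real_derivative d (Suc m) t) (at t)" if "-1/2 \<le> t" "t \<le> 1/2" for m t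
  proof -
    have t: "0 < 1 + t" using that by simp
    have "((\<lambda>t. (1 + t) powr (p - real m)) has_real_derivative
        (p - real m) * (1 + t) powr (p - real m - 1) * 1) (at t)"
      by (rule DERIV_chain2[where f="\<lambda>z. z powr (p - real m)" and g="\<lambda>t. 1 + t", OF has_real_derivative_powr[OF t]])
        (auto intro!: derivative_eq_intros)
    from DERIV_cmult[OF this, of "\<Prod>i<m. p - real i"]
    show ?thesis
      by (simp add: d_def[abs_def] diff_diff_eq ac_simps)
  qed
  show "\<bar>(1 + y) powr p - (1 + p * y + p * (p - 1) / 2 * y\<^sup>2)\<bar> \<le> K * \<bar>y\<bar> ^ 3"
  proof (cases "y = 0")
    case False
    obtain t where t: "if y < 0 then y < t \<and> t < 0 else 0 < t \<and> t < y"
      and taylor: "d 0 y = (\<Sum>m<3. d m 0 / fact m * (y - 0) ^ m) + d 3 t / fact 3 * (y - 0) ^ 3"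
      using Taylor[of 3 d "d 0" "-1/2" "1/2" 0 y] deriv y False by (force simp: abs_le_iff)
    have "\<bar>d 3 t\<bar> = \<bar>p * (p - 1) * (p - 2)\<bar> * (1 + t) powr (p - 3)"
      by (simp add: d_def eval_nat_numeral abs_mult)
    also have "\<dots> \<le> \<bar>p * (p - 1) * (p - 2)\<bar> * 2 powr \<bar>p - 3\<bar>"
      using t y by (intro mult_left_mono one_plus_powr_le_two_powr_abs) (auto split: if_splits)
    finally have bound: "\<bar>d 3 t\<bar> / 6 \<le> K" by (simp add: K_def)
    have "(\<Sum>m<3. d m 0 / fact m * (y - 0) ^ m) = 1 + p * y + p * (p - 1) / 2 * y\<^sup>2"
      by (simp add: d_def eval_nat_numeral power2_eq_square)
    moreover have "d 0 y = (1 + y) powr p" "fact 3 = (6::real)"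
      by (simp_all add: d_def fact_numeral)
    ultimately have remainder: "(1 + y) powr p - (1 + p * y + p * (p - 1) / 2 * y\<^sup>2) = d 3 t / 6 * y ^ 3"
      using taylor by simp
    have "\<bar>(1 + y) powr p - (1 + p * y + p * (p - 1) / 2 * y\<^sup>2)\<bar> = \<bar>d 3 t\<bar> / 6 * \<bar>y\<bar> ^ 3"
      unfolding remainder by (simp add: abs_mult power_abs)
    also have "\<dots> \<le> K * \<bar>y\<bar> ^ 3"
      using bound by (intro mult_right_mono) auto
    finally show ?thesis .
  qed simp
qed

lemma abs_one_plus_powr_le_large:
  fixes p y :: real
  assumes y: "1/2 \<le> \<bar>y\<bar>" and p: "0 \<le> p" "p \<le> real (2 * q)"
  shows "\<bar>1 + y\<bar> powr p \<le> 3 powr p * (8 * \<bar>y\<bar> ^ 3 + y ^ (2 * q))"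
proof -
  have "(1/2) ^ 3 \<le> \<bar>y\<bar> ^ 3"
    using y by (intro power_mono) auto
  then have cube: "1 \<le> 8 * \<bar>y\<bar> ^ 3"
    by (simp add: power3_eq_cube)
  have small_or_large: "\<bar>y\<bar> powr p \<le> 8 * \<bar>y\<bar> ^ 3 + y ^ (2 * q)"
  proof (cases "\<bar>y\<bar> \<le> 1")
    case True
    then have "\<bar>y\<bar> powr p \<le> 1"
      using p by (intro powr_le1) auto
    then show ?thesis
      using cube by (simp add: power_mult add_increasing2)
  next
    case False
    then have "\<bar>y\<bar> powr p \<le> \<bar>y\<bar> powr real (2 * q)"
      using p by (intro powr_mono) auto
    also have "\<dots> = \<bar>y\<bar> ^ (2 * q)"
      using False by (intro powr_realpow) auto
    also have "\<dots> = y ^ (2 * q)"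
      by (simp add: power_even_abs)
    finally show ?thesis
      using cube by linarith
  qed
  have "\<bar>1 + y\<bar> powr p \<le> (3 * \<bar>y\<bar>) powr p"
    using y p by (intro powr_mono2) auto
  also have "\<dots> = 3 powr p * \<bar>y\<bar> powr p"
    by (simp add: powr_mult)
  also have "\<dots> \<le> 3 powr p * (8 * \<bar>y\<bar> ^ 3 + y ^ (2 * q))"
    using small_or_large by (rule mult_left_mono) simp
  finally show ?thesis .
qed

text \<open>The term \<open>y ^ (2 * q)\<close> with \<open>p \<le> 2 * q\<close> absorbs the growth of \<open>\<bar>1 + y\<bar> powr p\<close> for large \<open>y\<close>;
  against a Gaussian of variance \<open>\<sigma>\<^sup>2 \<le> 1\<close> it only costs \<open>O(\<sigma>\<^sup>3)\<close>, like the Taylor remainder.\<close>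

lemma abs_one_plus_powr_global_bound:
  fixes p :: real
  assumes p: "1 \<le> p"
  obtains K q where "0 \<le> K" "2 \<le> q"
    and "\<And>y. \<bar>1 + y\<bar> powr p \<le> 1 + p * y + p * (p - 1) / 2 * y\<^sup>2 + K * (\<bar>y\<bar> ^ 3 + y ^ (2 * q))"
proof -
  obtain K1 where K1: "0 \<le> K1"
    and taylor: "\<And>y. \<bar>y\<bar> \<le> 1/2 \<Longrightarrow> \<bar>(1 + y) powr p - (1 + p * y + p * (p - 1) / 2 * y\<^sup>2)\<bar> \<le> K1 * \<bar>y\<bar> ^ 3"
    using one_plus_powr_taylor2_remainder[where p=p] by blast
  define q where "q = nat \<lceil>p\<rceil> + 2"
  define K where "K = K1 + 8 * 3 powr p + 4 * p"
  show ?thesis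
  proof
    show "0 \<le> K" "2 \<le> q"
      using K1 p by (simp_all add: K_def q_def)
    fix y :: real
    have even: "0 \<le> y ^ (2 * q)"
      by (simp add: power_mult)
    show "\<bar>1 + y\<bar> powr p \<le> 1 + p * y + p * (p - 1) / 2 * y\<^sup>2 + K * (\<bar>y\<bar> ^ 3 + y ^ (2 * q))"
    proof (cases "\<bar>y\<bar> \<le> 1/2")
      case True
      then have "\<bar>1 + y\<bar> powr p \<le> 1 + p * y + p * (p - 1) / 2 * y\<^sup>2 + K1 * \<bar>y\<bar> ^ 3"
        using taylor[of y] by (simp add: abs_le_iff)
      also have "K1 * \<bar>y\<bar> ^ 3 \<le> K * (\<bar>y\<bar> ^ 3 + y ^ (2 * q))"
        using K1 p even by (intro mult_mono) (auto simp: K_def)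
      finally show ?thesis by simp
    next
      case False
      have "p \<le> real (2 * q)"
        using p unfolding q_def by simp linarith
      with False p have "\<bar>1 + y\<bar> powr p \<le> 3 powr p * (8 * \<bar>y\<bar> ^ 3 + y ^ (2 * q))"
        by (intro abs_one_plus_powr_le_large) auto
      moreover have "3 powr p * (8 * \<bar>y\<bar> ^ 3 + y ^ (2 * q))
          \<le> 1 + p * y + p * (p - 1) / 2 * y\<^sup>2 + K * (\<bar>y\<bar> ^ 3 + y ^ (2 * q))"
      proof -
        have "\<bar>y\<bar> * (1/2) ^ 2 \<le> \<bar>y\<bar> * \<bar>y\<bar> ^ 2"
          using False by (intro mult_left_mono power_mono) auto
        then have "\<bar>y\<bar> \<le> 4 * \<bar>y\<bar> ^ 3"
          by (simp add: power2_eq_square power3_eq_cube)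
        then have "- (4 * p * \<bar>y\<bar> ^ 3) \<le> p * y"
          using p by (cases "0 \<le> y") (auto intro: order_trans[of _ "- (p * \<bar>y\<bar>)"])
        moreover have "0 \<le> p * (p - 1) / 2 * y\<^sup>2" "0 \<le> K1 * \<bar>y\<bar> ^ 3" "0 \<le> K1 * y ^ (2 * q)"
          "0 \<le> 3 powr p * y ^ (2 * q)" "0 \<le> p * y ^ (2 * q)"
          using K1 even p by simp_all
        ultimately show ?thesis
          unfolding K_def by (simp add: distrib_left distrib_right)
      qed
      ultimately show ?thesis
        by (rule order_trans)
    qed
  qed
qed

lemma has_bochner_integral_normal_majorant:
  fixes \<sigma> a1 a2 a3 a4 :: real
  assumes "0 < \<sigma>"
  shows "has_bochner_integral lborel
    (\<lambda>x. normal_density 0 \<sigma> x * (1 + a1 * x + a2 * x\<^sup>2 + a3 * \<bar>x\<bar> ^ 3 + a4 * x ^ (2 * q)))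
    (1 + a2 * \<sigma>\<^sup>2 + a3 * (2 * \<sigma> ^ 3 * sqrt (2 / pi)) + a4 * (\<sigma> ^ (2 * q) * (fact (2 * q) / (2 ^ q * fact q))))"
proof -
  let ?n = "normal_density 0 \<sigma>"
  have "has_bochner_integral lborel ?n 1"
    using normal_moment_even[OF assms, where k=0 and \<mu>=0] by simp
  moreover have "has_bochner_integral lborel (\<lambda>x. ?n x * x) 0"
    using normal_moment_odd[OF assms, where k=0 and \<mu>=0] by simp
  moreover have "has_bochner_integral lborel (\<lambda>x. ?n x * x\<^sup>2) (\<sigma>\<^sup>2)"
    using normal_moment_even[OF assms, where k=1 and \<mu>=0] by simp
  moreover have "has_bochner_integral lborel (\<lambda>x. ?n x * \<bar>x\<bar> ^ 3) (2 * \<sigma> ^ 3 * sqrt (2 / pi))"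
    using normal_moment_abs_odd[OF assms, where k=1 and \<mu>=0] by (simp add: numeral_3_eq_3)
  moreover have "has_bochner_integral lborel (\<lambda>x. ?n x * x ^ (2 * q)) (\<sigma> ^ (2 * q) * (fact (2 * q) / (2 ^ q * fact q)))"
  proof -
    have "(\<sigma> ^ q)\<^sup>2 = (\<sigma>\<^sup>2) ^ q"
      by (simp flip: power_mult add: mult.commute)
    then show ?thesis
      using normal_moment_even[OF assms, where k=q and \<mu>=0]
      by (simp add: power_mult_distrib power_divide power_mult field_simps)
  qed
  ultimately have "has_bochner_integral lborel
    (\<lambda>x. ?n x + a1 * (?n x * x) + a2 * (?n x * x\<^sup>2) + a3 * (?n x * \<bar>x\<bar> ^ 3) + a4 * (?n x * x ^ (2 * q)))
    (1 + a1 * 0 + a2 * \<sigma>\<^sup>2 + a3 * (2 * \<sigma> ^ 3 * sqrt (2 / pi)) + a4 * (\<sigma> ^ (2 * q) * (fact (2 * q) / (2 ^ q * fact q))))"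
    by (intro has_bochner_integral_add has_bochner_integral_mult_right)
  then show ?thesis
    by (simp add: algebra_simps)
qed

lemma normal_moment_abs_one_plus_powr_le:
  fixes p b :: real
  assumes p: "1 \<le> p"
  obtains K where "\<And>\<sigma>. 0 < \<sigma> \<Longrightarrow> \<sigma> \<le> 1 \<Longrightarrow>
    (\<integral>\<^sup>+x. ennreal (normal_density 0 \<sigma> x) * ennreal (\<bar>1 + b * x\<bar> powr p) \<partial>lborel)
      \<le> ennreal (1 + p * (p - 1) / 2 * b\<^sup>2 * \<sigma>\<^sup>2 + K * \<sigma> ^ 3)"
proof -
  obtain K q where K: "0 \<le> K" and q: "2 \<le> q"
    and bound: "\<And>y. \<bar>1 + y\<bar> powr p \<le> 1 + p * y + p * (p - 1) / 2 * y\<^sup>2 + K * (\<bar>y\<bar> ^ 3 + y ^ (2 * q))"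
    using abs_one_plus_powr_global_bound[OF p] by blast
  define m :: real where "m = fact (2 * q) / (2 ^ q * fact q)"
  show ?thesis
  proof
    fix \<sigma> :: real
    assume \<sigma>: "0 < \<sigma>" "\<sigma> \<le> 1"
    let ?n = "normal_density 0 \<sigma>"
    define G where "G x = 1 + (p * b) * x + (p * (p - 1) / 2 * b\<^sup>2) * x\<^sup>2 + (K * \<bar>b\<bar> ^ 3) * \<bar>x\<bar> ^ 3
      + (K * b ^ (2 * q)) * x ^ (2 * q)" for x
    have integral_G: "has_bochner_integral lborel (\<lambda>x. ?n x * G x)
      (1 + p * (p - 1) / 2 * b\<^sup>2 * \<sigma>\<^sup>2 + K * \<bar>b\<bar> ^ 3 * (2 * \<sigma> ^ 3 * sqrt (2 / pi)) + K * b ^ (2 * q) * (\<sigma> ^ (2 * q) * m))"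
      unfolding G_def m_def by (rule has_bochner_integral_normal_majorant[OF \<sigma>(1)])
    have G: "\<bar>1 + b * x\<bar> powr p \<le> G x" for x
      using bound[of "b * x"] by (simp add: G_def abs_mult power_mult_distrib algebra_simps)
    have "(\<integral>\<^sup>+x. ennreal (?n x) * ennreal (\<bar>1 + b * x\<bar> powr p) \<partial>lborel) \<le> (\<integral>\<^sup>+x. ennreal (?n x * G x) \<partial>lborel)"
      by (intro nn_integral_mono) (auto simp flip: ennreal_mult' intro!: ennreal_leI mult_left_mono G)
    also have "\<dots> = ennreal (1 + p * (p - 1) / 2 * b\<^sup>2 * \<sigma>\<^sup>2 + K * \<bar>b\<bar> ^ 3 * (2 * \<sigma> ^ 3 * sqrt (2 / pi))
        + K * b ^ (2 * q) * (\<sigma> ^ (2 * q) * m))"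
    proof -
      have "AE x in lborel. 0 \<le> ?n x * G x"
        using G by (auto intro!: mult_nonneg_nonneg order_trans[OF _ G])
      then show ?thesis
        using integral_G by (simp add: has_bochner_integral_iff nn_integral_eq_integral)
    qed
    also have "\<dots> \<le> ennreal (1 + p * (p - 1) / 2 * b\<^sup>2 * \<sigma>\<^sup>2 + K * (2 * \<bar>b\<bar> ^ 3 + b ^ (2 * q) * m) * \<sigma> ^ 3)"
    proof (intro ennreal_leI)
      have "sqrt (2 / pi) \<le> 1"
        using pi_gt3 by (simp add: real_sqrt_le_1_iff)
      then have "K * \<bar>b\<bar> ^ 3 * (2 * \<sigma> ^ 3 * sqrt (2 / pi)) \<le> K * \<bar>b\<bar> ^ 3 * (2 * \<sigma> ^ 3)"
        using K \<sigma> by (intro mult_left_mono) auto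
      moreover have "\<sigma> ^ (2 * q) \<le> \<sigma> ^ 3"
        using \<sigma> q by (intro power_decreasing) auto
      then have "K * b ^ (2 * q) * (\<sigma> ^ (2 * q) * m) \<le> K * b ^ (2 * q) * (\<sigma> ^ 3 * m)"
        using K by (intro mult_left_mono mult_right_mono) (auto simp: m_def power_mult)
      ultimately show "1 + p * (p - 1) / 2 * b\<^sup>2 * \<sigma>\<^sup>2 + K * \<bar>b\<bar> ^ 3 * (2 * \<sigma> ^ 3 * sqrt (2 / pi))
          + K * b ^ (2 * q) * (\<sigma> ^ (2 * q) * m)
        \<le> 1 + p * (p - 1) / 2 * b\<^sup>2 * \<sigma>\<^sup>2 + K * (2 * \<bar>b\<bar> ^ 3 + b ^ (2 * q) * m) * \<sigma> ^ 3"
        by (simp add: algebra_simps)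
    qed
    finally show "(\<integral>\<^sup>+x. ennreal (?n x) * ennreal (\<bar>1 + b * x\<bar> powr p) \<partial>lborel)
      \<le> ennreal (1 + p * (p - 1) / 2 * b\<^sup>2 * \<sigma>\<^sup>2 + K * (2 * \<bar>b\<bar> ^ 3 + b ^ (2 * q) * m) * \<sigma> ^ 3)" .
  qed
qed

lemma eventually_normal_moment_le_exp_decay:
  fixes p b c :: real
  assumes p: "1 \<le> p" and "0 < p * c - p * (p - 1) / 2 * b\<^sup>2"
  shows "\<forall>\<^sub>F \<tau> in at_right 0.
    (\<integral>\<^sup>+x. ennreal (normal_density 0 (sqrt \<tau>) x) * ennreal (\<bar>1 + b * x\<bar> powr p) \<partial>lborel)
      \<le> ennreal (exp (- ((p * c - p * (p - 1) / 2 * b\<^sup>2) / 2) * \<tau>) * (1 + \<tau> * c) powr p)"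
proof -
  define \<mu> where "\<mu> = p * c - p * (p - 1) / 2 * b\<^sup>2"
  obtain K where moment: "\<And>\<sigma>. 0 < \<sigma> \<Longrightarrow> \<sigma> \<le> 1 \<Longrightarrow>
    (\<integral>\<^sup>+x. ennreal (normal_density 0 \<sigma> x) * ennreal (\<bar>1 + b * x\<bar> powr p) \<partial>lborel)
      \<le> ennreal (1 + p * (p - 1) / 2 * b\<^sup>2 * \<sigma>\<^sup>2 + K * \<sigma> ^ 3)"
    using normal_moment_abs_one_plus_powr_le[OF p] by blast
  \<comment> \<open>Both sides are 1 + (p c - \<mu>) \<tau> + o(\<tau>) and 1 + (p c - \<mu>/2) \<tau> + o(\<tau>): the margin \<mu>/2 \<tau> wins.\<close>
  have "\<forall>\<^sub>F \<tau> in at_right 0. 1 + (p * c - \<mu>) * \<tau> + K * sqrt \<tau> ^ 3 < exp (- (\<mu> / 2) * \<tau>) * (1 + c * \<tau>) powr p"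
    using assms unfolding \<mu>_def[symmetric] by real_asymp
  moreover have "\<forall>\<^sub>F \<tau> in at_right 0. 0 < \<tau> \<and> \<tau> < (1::real)"
    by (auto simp: eventually_at_right_field intro: exI[of _ 1])
  ultimately show ?thesis
    unfolding \<mu>_def[symmetric]
  proof eventually_elim
    case (elim \<tau>)
    then have "1 + p * (p - 1) / 2 * b\<^sup>2 * (sqrt \<tau>)\<^sup>2 + K * sqrt \<tau> ^ 3 \<le> exp (- (\<mu> / 2) * \<tau>) * (1 + \<tau> * c) powr p"
      by (simp add: \<mu>_def algebra_simps)
    with moment[of "sqrt \<tau>"] elim show ?case
      by (auto elim!: order_trans intro: ennreal_leI)
  qed
qed

lemma (in prob_space) indep_var_nn_integral_mult:
  fixes X Y :: "'a \<Rightarrow> real"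
  assumes "indep_var borel X borel Y" "\<And>\<omega>. 0 \<le> X \<omega>" "\<And>\<omega>. 0 \<le> Y \<omega>"
  shows "(\<integral>\<^sup>+\<omega>. ennreal (X \<omega> * Y \<omega>) \<partial>M) = (\<integral>\<^sup>+\<omega>. X \<omega> \<partial>M) * (\<integral>\<^sup>+\<omega>. Y \<omega> \<partial>M)"
proof -
  let ?XY = "case_bool (\<lambda>\<omega>. ennreal (X \<omega>)) (\<lambda>\<omega>. ennreal (Y \<omega>))"
  have borel: "(\<lambda>_. borel) = case_bool borel borel"
    by (simp add: fun_eq_iff split: bool.split)
  have "indep_var borel (\<lambda>\<omega>. ennreal (X \<omega>)) borel (\<lambda>\<omega>. ennreal (Y \<omega>))"
    using indep_var_compose[OF assms(1), of ennreal borel ennreal borel] by (simp add: o_def)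
  then have "indep_vars (\<lambda>_. borel) ?XY UNIV"
    unfolding indep_var_def borel .
  then have "(\<integral>\<^sup>+\<omega>. (\<Prod>i\<in>UNIV. ?XY i \<omega>) \<partial>M) = (\<Prod>i\<in>UNIV. \<integral>\<^sup>+\<omega>. ?XY i \<omega> \<partial>M)"
    by (intro indep_vars_nn_integral) auto
  then show ?thesis
    using assms by (simp add: UNIV_bool ennreal_mult' mult.commute)
qed

lemma (in prob_space) nn_integral_le_power_of_indep_factors:
  fixes X G :: "nat \<Rightarrow> 'a \<Rightarrow> real"
  assumes nonneg: "\<And>m \<omega>. 0 \<le> X m \<omega>" "\<And>m \<omega>. 0 \<le> G m \<omega>"
    and step: "\<And>m \<omega>. X (Suc m) \<omega> \<le> G m \<omega> * X m \<omega>"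
    and indep: "\<And>m. indep_var borel (X m) borel (G m)"
    and factor: "\<And>m. (\<integral>\<^sup>+\<omega>. G m \<omega> \<partial>M) \<le> ennreal E" and "0 \<le> E"
  shows "(\<integral>\<^sup>+\<omega>. X n \<omega> \<partial>M) \<le> ennreal (E ^ n) * (\<integral>\<^sup>+\<omega>. X 0 \<omega> \<partial>M)"
proof (induction n)
  case (Suc n)
  have "(\<integral>\<^sup>+\<omega>. X (Suc n) \<omega> \<partial>M) \<le> (\<integral>\<^sup>+\<omega>. ennreal (X n \<omega> * G n \<omega>) \<partial>M)"
    using step by (intro nn_integral_mono ennreal_leI) (simp add: mult.commute)
  also have "\<dots> = (\<integral>\<^sup>+\<omega>. X n \<omega> \<partial>M) * (\<integral>\<^sup>+\<omega>. G n \<omega> \<partial>M)"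
    using indep nonneg by (rule indep_var_nn_integral_mult)
  also have "\<dots> \<le> ennreal (E ^ n) * (\<integral>\<^sup>+\<omega>. X 0 \<omega> \<partial>M) * ennreal E"
    using Suc.IH factor by (intro mult_mono) auto
  also have "\<dots> = ennreal (E ^ Suc n) * (\<integral>\<^sup>+\<omega>. X 0 \<omega> \<partial>M)"
    using \<open>0 \<le> E\<close> by (simp add: ennreal_mult' mult_ac)
  finally show ?case .
qed simp

lemma integral_le_of_nn_integral_le:
  fixes f g :: "'a \<Rightarrow> real"
  assumes f: "integrable M f" "\<And>x. 0 \<le> f x" and g: "\<And>x. 0 \<le> g x" and "0 \<le> c"
    and le: "(\<integral>\<^sup>+x. g x \<partial>M) \<le> ennreal c * (\<integral>\<^sup>+x. f x \<partial>M)"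
  shows "(\<integral>x. g x \<partial>M) \<le> c * (\<integral>x. f x \<partial>M)"
proof (cases "integrable M g")
  case True
  have "ennreal (\<integral>x. g x \<partial>M) = (\<integral>\<^sup>+x. g x \<partial>M)"
    using True g by (simp add: nn_integral_eq_integral)
  also have "\<dots> \<le> ennreal (c * (\<integral>x. f x \<partial>M))"
    using le f \<open>0 \<le> c\<close> by (simp add: nn_integral_eq_integral ennreal_mult)
  finally show ?thesis
    using f \<open>0 \<le> c\<close> by (simp add: ennreal_le_iff integral_nonneg)
next
  case False
  then show ?thesis
    using f \<open>0 \<le> c\<close> by (simp add: not_integrable_integral_eq integral_nonneg)
qed

lemma (in filtration) borel_measurable_F_mono:
  "f \<in> borel_measurable (F s) \<Longrightarrow> s \<le> t \<Longrightarrow> f \<in> borel_measurable (F t)"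
  using borel_measurable_subalgebra[OF sets_F_mono] space_F by metis

lemma std_brownian_motion_borel_measurable:
  "std_brownian_motion M F W \<Longrightarrow> f \<in> borel_measurable (F t) \<Longrightarrow> f \<in> borel_measurable M"
  unfolding std_brownian_motion_def filtration_def by (metis borel_measurable_subalgebra)

lemma std_brownian_motion_increment_nn_integral:
  assumes "std_brownian_motion M F W" "0 \<le> s" "s < t" "g \<in> borel_measurable borel"
  shows "(\<integral>\<^sup>+\<omega>. g (W t \<omega> - W s \<omega>) \<partial>M) = (\<integral>\<^sup>+x. ennreal (normal_density 0 (sqrt (t - s)) x) * g x \<partial>lborel)"
proof -
  have "distributed M lborel (\<lambda>\<omega>. W t \<omega> - W s \<omega>) (\<lambda>x. ennreal (normal_density 0 (sqrt (t - s)) x))"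
    using assms unfolding std_brownian_motion_def by blast
  from distributed_nn_integral[OF this, of g] show ?thesis
    using assms(4) by simp
qed

lemma std_brownian_motion_increment_factor_le:
  assumes BM: "std_brownian_motion M F W" and st: "0 \<le> s" "s < t" and "0 < a" "0 \<le> E"
    and moment: "(\<integral>\<^sup>+x. ennreal (normal_density 0 (sqrt (t - s)) x) * ennreal (\<bar>1 + b * x\<bar> powr p) \<partial>lborel)
      \<le> ennreal (E * a powr p)"
  shows "(\<integral>\<^sup>+\<omega>. (\<bar>1 + b * (W t \<omega> - W s \<omega>)\<bar> / a) powr p \<partial>M) \<le> ennreal E"
proof -
  have "(\<lambda>x. ennreal ((\<bar>1 + b * x\<bar> / a) powr p)) \<in> borel_measurable borel"
    by measurable
  then have "(\<integral>\<^sup>+\<omega>. (\<bar>1 + b * (W t \<omega> - W s \<omega>)\<bar> / a) powr p \<partial>M)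
      = (\<integral>\<^sup>+x. ennreal (normal_density 0 (sqrt (t - s)) x) * ennreal ((\<bar>1 + b * x\<bar> / a) powr p) \<partial>lborel)"
    by (rule std_brownian_motion_increment_nn_integral[OF BM st])
  also have "\<dots> = (\<integral>\<^sup>+x. ennreal (1 / a powr p)
      * (ennreal (normal_density 0 (sqrt (t - s)) x) * ennreal (\<bar>1 + b * x\<bar> powr p)) \<partial>lborel)"
    using \<open>0 < a\<close> by (intro nn_integral_cong) (simp add: powr_divide ennreal_mult[symmetric] mult_ac)
  also have "\<dots> = ennreal (1 / a powr p) * (\<integral>\<^sup>+x. ennreal (normal_density 0 (sqrt (t - s)) x)
      * ennreal (\<bar>1 + b * x\<bar> powr p) \<partial>lborel)"
    by (rule nn_integral_cmult) measurable
  also have "\<dots> \<le> ennreal (1 / a powr p) * ennreal (E * a powr p)"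
    using moment by (rule mult_left_mono) simp
  also have "\<dots> = ennreal E"
    using \<open>0 < a\<close> \<open>0 \<le> E\<close> by (simp flip: ennreal_mult)
  finally show ?thesis .
qed

lemma std_brownian_motion_indep_increment:
  assumes BM: "std_brownian_motion M F W" and st: "0 \<le> s" "s < t"
    and Z: "Z \<in> borel_measurable (F s)"
  shows "prob_space.indep_var M borel Z borel (\<lambda>\<omega>. W t \<omega> - W s \<omega>)"
proof -
  interpret prob_space M
    using BM by (simp add: std_brownian_motion_def)
  define D where "D \<omega> = W t \<omega> - W s \<omega>" for \<omega>
  have F: "filtration (space M) F" and W: "\<And>t. 0 \<le> t \<Longrightarrow> W t \<in> borel_measurable (F t)"
    and indep: "\<And>A B. A \<in> sets (F s) \<Longrightarrow> B \<in> sets borel \<Longrightarrow>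
      prob (A \<inter> (D -` B \<inter> space M)) = prob A * prob (D -` B \<inter> space M)"
    using BM st unfolding std_brownian_motion_def D_def by auto
  have Z_M: "Z \<in> borel_measurable M"
    using BM Z by (rule std_brownian_motion_borel_measurable)
  have "W t \<in> borel_measurable M" "W s \<in> borel_measurable M"
    using st by (auto intro!: std_brownian_motion_borel_measurable[OF BM W])
  then have D_M: "D \<in> borel_measurable M"
    unfolding D_def by measurable
  have Int_stable: "Int_stable {f -` A \<inter> space M |A. A \<in> sets borel}" for f :: "'a \<Rightarrow> real"
  proof (safe intro!: Int_stableI)
    fix A B :: "real set"
    assume "A \<in> sets borel" "B \<in> sets borel"
    then show "\<exists>C. (f -` A \<inter> space M) \<inter> (f -` B \<inter> space M) = f -` C \<inter> space M \<and> C \<in> sets borel"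
      by (intro exI[of _ "A \<inter> B"]) auto
  qed
  have "indep_set {Z -` A \<inter> space M |A. A \<in> sets borel} {D -` A \<inter> space M |A. A \<in> sets borel}"
    unfolding indep_sets2_eq
  proof safe
    fix A B :: "real set"
    assume "A \<in> sets borel" "B \<in> sets borel"
    moreover have "Z -` A \<inter> space M \<in> sets (F s)"
      using measurable_sets[OF Z \<open>A \<in> sets borel\<close>] filtration.space_F[OF F] by simp
    ultimately show "prob ((Z -` A \<inter> space M) \<inter> (D -` B \<inter> space M)) =
      prob (Z -` A \<inter> space M) * prob (D -` B \<inter> space M)"
      using indep by simp
  qed (use Z_M D_M in \<open>auto intro: measurable_sets\<close>)
  then show ?thesis
    unfolding indep_var_eq D_def[symmetric]
    using Z_M D_M by (intro conjI indep_set_sigma_sets Int_stable) auto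
qed

lemma normp_nonneg: "0 \<le> normp p N y"
  by (simp add: normp_def)

lemma normp_le_scaled:
  assumes "0 \<le> s" and le: "\<And>k. k \<in> {1..N} \<Longrightarrow> \<bar>y k\<bar> \<le> s * \<bar>x k\<bar>" and "0 \<le> p"
  shows "normp p N y \<le> s powr p * normp p N x"
proof -
  have "(\<Sum>k=1..N. \<bar>y k\<bar>\<^sup>2) \<le> (\<Sum>k=1..N. (s * \<bar>x k\<bar>)\<^sup>2)"
    using le by (intro sum_mono power_mono) auto
  then have "normp p N y \<le> (s\<^sup>2 * (\<Sum>k=1..N. \<bar>x k\<bar>\<^sup>2)) powr (p / 2)"
    unfolding normp_def using \<open>0 \<le> p\<close>
    by (intro powr_mono2) (auto simp: sum_distrib_left power_mult_distrib intro: sum_nonneg)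
  also have "\<dots> = (s powr 2) powr (p / 2) * normp p N x"
    unfolding normp_def using \<open>0 \<le> s\<close> by (simp add: powr_mult)
  also have "\<dots> = s powr p * normp p N x"
    by (simp add: powr_powr)
  finally show ?thesis .
qed

lemma borel_measurable_normp [measurable]:
  assumes "\<And>k. y k \<in> borel_measurable M"
  shows "(\<lambda>\<omega>. normp p N (\<lambda>k. y k \<omega>)) \<in> borel_measurable M"
  unfolding normp_def using assms by measurable

lemma integrable_normp_inner:
  fixes y :: "'a \<Rightarrow> 'h::real_inner" and \<phi> :: "nat \<Rightarrow> 'h"
  assumes "integrable M (\<lambda>\<omega>. norm (y \<omega>) powr p)" "y \<in> borel_measurable M"
    and "\<And>k. k \<in> {1..N} \<Longrightarrow> norm (\<phi> k) \<le> 1" and "0 \<le> p"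
  shows "integrable M (\<lambda>\<omega>. normp p N (\<lambda>k. y \<omega> \<bullet> \<phi> k))"
proof (rule Bochner_Integration.integrable_bound)
  show "integrable M (\<lambda>\<omega>. norm (y \<omega>) powr p * normp p N (\<lambda>_. 1))"
    using assms(1) by (rule integrable_mult_left)
  have "(\<lambda>\<omega>. y \<omega> \<bullet> \<phi> k) \<in> borel_measurable M" for k
    by (rule borel_measurable_continuous_on[OF _ assms(2)]) (intro continuous_intros)
  then show "(\<lambda>\<omega>. normp p N (\<lambda>k. y \<omega> \<bullet> \<phi> k)) \<in> borel_measurable M"
    by measurable
  have "\<bar>y \<omega> \<bullet> \<phi> k\<bar> \<le> norm (y \<omega>) * \<bar>1\<bar>" if "k \<in> {1..N}" for \<omega> k
    using order_trans[OF Cauchy_Schwarz_ineq2 mult_left_mono[OF assms(3)[OF that] norm_ge_zero]] by simp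
  then have "normp p N (\<lambda>k. y \<omega> \<bullet> \<phi> k) \<le> norm (y \<omega>) powr p * normp p N (\<lambda>_. 1)" for \<omega>
    using assms(4) by (intro normp_le_scaled) auto
  then show "AE \<omega> in M. norm (normp p N (\<lambda>k. y \<omega> \<bullet> \<phi> k)) \<le> norm (norm (y \<omega>) powr p * normp p N (\<lambda>_. 1))"
    by (simp add: normp_nonneg)
qed

lemma iem_scheme_measurable:
  assumes F: "filtration \<Omega> F" and W: "\<And>t. 0 \<le> t \<Longrightarrow> W t \<in> borel_measurable (F t)"
    and Y0: "\<And>k. Y0 k \<in> borel_measurable (F 0)" and "0 \<le> \<tau>"
  shows "iem_scheme b0 b1 lam \<tau> W Y0 n k \<in> borel_measurable (F (real n * \<tau>))"
proof (induction n arbitrary: k)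
  case 0
  have "iem_scheme b0 b1 lam \<tau> W Y0 0 k = Y0 k"
    by (simp add: fun_eq_iff)
  then show ?case
    using Y0 by simp
next
  case (Suc n)
  have le: "real n * \<tau> \<le> real (Suc n) * \<tau>"
    using \<open>0 \<le> \<tau>\<close> by (simp add: mult_right_mono)
  have "iem_scheme b0 b1 lam \<tau> W Y0 n k \<in> borel_measurable (F (real (Suc n) * \<tau>))"
    by (rule filtration.borel_measurable_F_mono[OF F Suc.IH le])
  moreover have "W (real n * \<tau>) \<in> borel_measurable (F (real (Suc n) * \<tau>))"
    using \<open>0 \<le> \<tau>\<close> by (intro filtration.borel_measurable_F_mono[OF F W le]) auto
  moreover have "W (real (Suc n) * \<tau>) \<in> borel_measurable (F (real (Suc n) * \<tau>))"
    using \<open>0 \<le> \<tau>\<close> by (intro W) auto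
  moreover have "iem_scheme b0 b1 lam \<tau> W Y0 (Suc n) k = (\<lambda>\<omega>. iem_scheme b0 b1 lam \<tau> W Y0 n k \<omega> *
      (1 + b1 * (W (real (Suc n) * \<tau>) \<omega> - W (real n * \<tau>) \<omega>)) / (1 + \<tau> * (lam k - b0)))"
    by (simp add: fun_eq_iff)
  ultimately show ?case
    by simp
qed

lemma abs_iem_scheme_Suc_le:
  assumes "0 \<le> \<tau>" "0 \<le> c" "c \<le> lam k - b0"
  shows "\<bar>iem_scheme b0 b1 lam \<tau> W Y0 (Suc n) k \<omega>\<bar>
    \<le> \<bar>1 + b1 * (W (real (Suc n) * \<tau>) \<omega> - W (real n * \<tau>) \<omega>)\<bar> / (1 + \<tau> * c) * \<bar>iem_scheme b0 b1 lam \<tau> W Y0 n k \<omega>\<bar>"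
proof -
  have "1 + \<tau> * c \<le> 1 + \<tau> * (lam k - b0)" "0 < 1 + \<tau> * c"
    using assms by (auto intro: mult_left_mono add_pos_nonneg)
  then show ?thesis
    by (simp add: abs_mult divide_left_mono mult_ac)
qed

lemma iem_scheme_nn_moment_le:
  assumes BM: "std_brownian_motion M F W" and "0 < \<tau>" "0 \<le> p" "0 \<le> c" "0 \<le> E"
    and lam: "\<And>k. k \<in> {1..N} \<Longrightarrow> c \<le> lam k - b0"
    and Y0: "\<And>k. Y0 k \<in> borel_measurable (F 0)"
    and factor: "(\<integral>\<^sup>+x. ennreal (normal_density 0 (sqrt \<tau>) x) * ennreal (\<bar>1 + b1 * x\<bar> powr p) \<partial>lborel)
      \<le> ennreal (E * (1 + \<tau> * c) powr p)"
  shows "(\<integral>\<^sup>+\<omega>. normp p N (\<lambda>k. iem_scheme b0 b1 lam \<tau> W Y0 n k \<omega>) \<partial>M)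
    \<le> ennreal (E ^ n) * (\<integral>\<^sup>+\<omega>. normp p N (\<lambda>k. Y0 k \<omega>) \<partial>M)"
proof -
  interpret prob_space M
    using BM by (simp add: std_brownian_motion_def)
  define a where "a = 1 + \<tau> * c"
  define X where "X m \<omega> = normp p N (\<lambda>k. iem_scheme b0 b1 lam \<tau> W Y0 m k \<omega>)" for m \<omega>
  define D where "D m \<omega> = W (real (Suc m) * \<tau>) \<omega> - W (real m * \<tau>) \<omega>" for m \<omega>
  define G where "G m \<omega> = (\<bar>1 + b1 * D m \<omega>\<bar> / a) powr p" for m \<omega>
  have a: "0 < a"
    using \<open>0 < \<tau>\<close> \<open>0 \<le> c\<close> by (simp add: a_def add_pos_nonneg)
  have "(\<integral>\<^sup>+\<omega>. X n \<omega> \<partial>M) \<le> ennreal (E ^ n) * (\<integral>\<^sup>+\<omega>. X 0 \<omega> \<partial>M)"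
  proof (rule nn_integral_le_power_of_indep_factors)
    show "0 \<le> X m \<omega>" "0 \<le> G m \<omega>" for m \<omega>
      by (simp_all add: X_def G_def normp_nonneg)
    show "X (Suc m) \<omega> \<le> G m \<omega> * X m \<omega>" for m \<omega>
      unfolding X_def G_def D_def a_def using assms
      by (intro normp_le_scaled abs_iem_scheme_Suc_le) (auto simp: add_pos_nonneg)
    show "indep_var borel (X m) borel (G m)" for m
    proof -
      have "X m \<in> borel_measurable (F (real m * \<tau>))"
        unfolding X_def using BM \<open>0 < \<tau>\<close> Y0
        by (intro borel_measurable_normp iem_scheme_measurable[of "space M"])
          (auto simp: std_brownian_motion_def)
      then have "indep_var borel (X m) borel (D m)"
        using std_brownian_motion_indep_increment[OF BM] \<open>0 < \<tau>\<close> by (simp add: D_def[abs_def])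
      then show ?thesis
        using indep_var_compose[of borel "X m" borel "D m" id borel "\<lambda>x. (\<bar>1 + b1 * x\<bar> / a) powr p" borel]
        by (simp add: G_def[abs_def] o_def)
    qed
    show "(\<integral>\<^sup>+\<omega>. G m \<omega> \<partial>M) \<le> ennreal E" for m
    proof -
      have "0 \<le> real m * \<tau>" "real m * \<tau> < real (Suc m) * \<tau>" "real (Suc m) * \<tau> - real m * \<tau> = \<tau>"
        using \<open>0 < \<tau>\<close> by (simp_all add: algebra_simps)
      then show ?thesis
        using std_brownian_motion_increment_factor_le[OF BM _ _ a \<open>0 \<le> E\<close>] factor
        unfolding G_def D_def a_def by simp
    qed
  qed (rule \<open>0 \<le> E\<close>)
  then show ?thesis
    by (simp add: X_def)
qed

lemma iem_scheme_moment_le: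
  assumes BM: "std_brownian_motion M F W" and "0 < \<tau>" "0 \<le> p" "0 \<le> c"
    and lam: "\<And>k. k \<in> {1..N} \<Longrightarrow> c \<le> lam k - b0"
    and Y0: "\<And>k. Y0 k \<in> borel_measurable (F 0)" "integrable M (\<lambda>\<omega>. normp p N (\<lambda>k. Y0 k \<omega>))"
    and factor: "(\<integral>\<^sup>+x. ennreal (normal_density 0 (sqrt \<tau>) x) * ennreal (\<bar>1 + b1 * x\<bar> powr p) \<partial>lborel)
      \<le> ennreal (exp (- r * \<tau>) * (1 + \<tau> * c) powr p)"
  shows "(\<integral>\<omega>. normp p N (\<lambda>k. iem_scheme b0 b1 lam \<tau> W Y0 n k \<omega>) \<partial>M)
    \<le> exp (- r * (real n * \<tau>)) * (\<integral>\<omega>. normp p N (\<lambda>k. Y0 k \<omega>) \<partial>M)"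
proof -
  have "exp (- r * (real n * \<tau>)) = exp (- r * \<tau>) ^ n"
    by (simp add: mult_ac flip: exp_of_nat_mult)
  moreover have "(\<integral>\<^sup>+\<omega>. normp p N (\<lambda>k. iem_scheme b0 b1 lam \<tau> W Y0 n k \<omega>) \<partial>M)
      \<le> ennreal (exp (- r * \<tau>) ^ n) * (\<integral>\<^sup>+\<omega>. normp p N (\<lambda>k. Y0 k \<omega>) \<partial>M)"
    using assms by (intro iem_scheme_nn_moment_le) auto
  ultimately show ?thesis
    using Y0(2) by (auto intro!: integral_le_of_nn_integral_le normp_nonneg)
qed

theorem proposition7:
  fixes M :: "'a measure" and F :: "real \<Rightarrow> 'a measure" and W :: "real \<Rightarrow> 'a \<Rightarrow> real"
    and lam :: "nat \<Rightarrow> real" and \<phi> :: "nat \<Rightarrow> 'h::{real_inner, complete_space}"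
    and y0 :: "'a \<Rightarrow> 'h" and \<beta>0 \<beta>1 p :: real and N :: nat
  assumes BM: "std_brownian_motion M F W"
    and lam_pos: "0 < lam 1"
    and lam_mono: "\<And>k. 1 \<le> k \<Longrightarrow> lam k \<le> lam (Suc k)"
    and lam_inf: "filterlim lam at_top sequentially"
    and onb_orth: "\<And>i j. 1 \<le> i \<Longrightarrow> 1 \<le> j \<Longrightarrow> \<phi> i \<bullet> \<phi> j = (if i = j then 1 else 0)"
    and onb_complete: "closure (span (\<phi> ` {1..})) = UNIV"
    and y0_meas: "y0 \<in> borel_measurable (F 0)"
    and y0_Lp: "integrable M (\<lambda>\<omega>. norm (y0 \<omega>) powr p)"
    and p_ge: "1 \<le> p" and N_ge: "1 \<le> N"
    and cond: "(p - 1) * \<beta>1\<^sup>2 < 2 * (lam 1 - \<beta>0)"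
  shows "\<exists>\<tau>0>0. \<exists>C>0. \<forall>\<tau>. 0 < \<tau> \<and> \<tau> < \<tau>0 \<longrightarrow>
           (\<forall>n::nat.
              (\<integral>\<omega>. normp p N (\<lambda>k. iem_scheme \<beta>0 \<beta>1 lam \<tau> W (\<lambda>k \<omega>. y0 \<omega> \<bullet> \<phi> k) n k \<omega>) \<partial>M)
              \<le> C * exp (- ((p * (lam 1 - \<beta>0) - p * (p - 1) / 2 * \<beta>1\<^sup>2) / 2) * (real n * \<tau>))
                  * (\<integral>\<omega>. normp p N (\<lambda>k. y0 \<omega> \<bullet> \<phi> k) \<partial>M))"
proof -
  define c where "c = lam 1 - \<beta>0"
  have "0 \<le> (p - 1) * \<beta>1\<^sup>2"
    using p_ge by simp
  then have c: "0 < c"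
    using cond by (simp add: c_def)
  have "0 < p / 2 * (2 * c - (p - 1) * \<beta>1\<^sup>2)"
    using cond p_ge by (simp add: c_def)
  then have "0 < p * c - p * (p - 1) / 2 * \<beta>1\<^sup>2"
    by (simp add: algebra_simps)
  from eventually_normal_moment_le_exp_decay[OF p_ge this]
  obtain \<tau>0 where "0 < \<tau>0" and factor: "\<And>\<tau>. 0 < \<tau> \<Longrightarrow> \<tau> < \<tau>0 \<Longrightarrow>
    (\<integral>\<^sup>+x. ennreal (normal_density 0 (sqrt \<tau>) x) * ennreal (\<bar>1 + \<beta>1 * x\<bar> powr p) \<partial>lborel)
      \<le> ennreal (exp (- ((p * c - p * (p - 1) / 2 * \<beta>1\<^sup>2) / 2) * \<tau>) * (1 + \<tau> * c) powr p)"
    unfolding eventually_at_right_field by auto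
  have "lam 1 \<le> lam k" if "1 \<le> k" for k
    using that by (induction k rule: dec_induct) (auto intro: order_trans[OF _ lam_mono])
  then have lam_ge: "c \<le> lam k - \<beta>0" if "k \<in> {1..N}" for k
    using that by (simp add: c_def)
  have y0_coeff: "(\<lambda>\<omega>. y0 \<omega> \<bullet> \<phi> k) \<in> borel_measurable (F 0)" for k
    by (rule borel_measurable_continuous_on[OF _ y0_meas]) (intro continuous_intros)
  have "integrable M (\<lambda>\<omega>. normp p N (\<lambda>k. y0 \<omega> \<bullet> \<phi> k))"
    using y0_Lp std_brownian_motion_borel_measurable[OF BM y0_meas] onb_orth p_ge
    by (intro integrable_normp_inner) (auto simp: norm_eq_sqrt_inner)
  then have bound: "(\<integral>\<omega>. normp p N (\<lambda>k. iem_scheme \<beta>0 \<beta>1 lam \<tau> W (\<lambda>k \<omega>. y0 \<omega> \<bullet> \<phi> k) n k \<omega>) \<partial>M)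
      \<le> exp (- ((p * c - p * (p - 1) / 2 * \<beta>1\<^sup>2) / 2) * (real n * \<tau>))
        * (\<integral>\<omega>. normp p N (\<lambda>k. y0 \<omega> \<bullet> \<phi> k) \<partial>M)" if "0 < \<tau>" "\<tau> < \<tau>0" for \<tau> n
    using that p_ge c factor[OF that] by (intro iem_scheme_moment_le[OF BM _ _ _ lam_ge y0_coeff]) auto
  show ?thesis
    by (rule exI[of _ \<tau>0], intro conjI exI[of _ 1] allI impI \<open>0 < \<tau>0\<close>) (use bound in \<open>auto simp: c_def\<close>)
qed

end
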